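(* For every $l\ge1$ and every positive integer $K$, $$\limsup_{n\to\infty} f(n)^{1/n}\le c_{l,K}\cdot 2^{\eta_{l,K}},$$ where $$c_{l,K}=\prod_{i=1}^K r_l(i)^{\frac{2}{i(i+1)}\prod_{j=1}^l(1-1/p_j)},\qquad \eta_{l,K}=2-\sum_{i=1}^K\frac{2}{i(i+1)}\prod_{j=1}^l\left(1-\frac1{p_j}\right)|M_l(i)|.$$
   Context: A set of positive integers is primitive if no element divides another. $f(n)$ is the number of $n$-element primitive subsets of $\{1,\dots,2n\}$. Let $p_1<p_2<\dots$ be the primes. $M_l$ is the set of positive integers all of whose prime factors lie in $\{p_1,\dots,p_l\}$, $M_l(x)=\{m\in M_l:m\le x\}$ ordered by divisibility, and $r_l(i)$ denotes the total number of maximum-size antichains of $M_l(i)$. *)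

theory Defs
  imports "HOL-Analysis.Analysis" "HOL-Computational_Algebra.Primes"
begin

definition primitive :: "nat set \<Rightarrow> bool" where
  "primitive A \<longleftrightarrow> (\<forall>a\<in>A. \<forall>b\<in>A. a dvd b \<longrightarrow> a = b)"

definition fprim :: "nat \<Rightarrow> nat" where
  "fprim n = card {A. A \<subseteq> {1..2*n} \<and> card A = n \<and> primitive A}"

text \<open>p j: the j-th prime, 1-indexed (p 1 = 2).\<close>
definition pr :: "nat \<Rightarrow> nat" where
  "pr j = enumerate {q::nat. prime q} (j - 1)"

definition Ml :: "nat \<Rightarrow> nat \<Rightarrow> nat set" where
  "Ml l x = {m. 1 \<le> m \<and> m \<le> x \<and> (\<forall>q. prime q \<and> q dvd m \<longrightarrow> q \<in> pr ` {1..l})}"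

definition width :: "nat \<Rightarrow> nat \<Rightarrow> nat" where
  "width l x = Max {card A | A. A \<subseteq> Ml l x \<and> primitive A}"

definition rl :: "nat \<Rightarrow> nat \<Rightarrow> nat" where
  "rl l i = card {A. A \<subseteq> Ml l i \<and> primitive A \<and> card A = width l i}"

definition cLK :: "nat \<Rightarrow> nat \<Rightarrow> real" where
  "cLK l K = (\<Prod>i=1..K. real (rl l i) powr
      (2 / (real i * (real i + 1)) * (\<Prod>j=1..l. 1 - 1 / real (pr j))))"

definition etaLK :: "nat \<Rightarrow> nat \<Rightarrow> real" where
  "etaLK l K = 2 - (\<Sum>i=1..K. 2 / (real i * (real i + 1)) *
      (\<Prod>j=1..l. 1 - 1 / real (pr j)) * real (card (Ml l i)))"

end

theory Submission
  imports Defs "HOL-Number_Theory.Totient"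
begin

(* Let P = p_1 * ... * p_l. Every m coprime to P is odd, and for distinct such m the classes
   m * M_l(2n div m) are disjoint subsets of {1..2n}. An n-element primitive set A in {1..2n}
   contains exactly one number of each odd part; so every odd element of M_l(i), i = 2n div m, is the
   odd part of a member of the trace {s in M_l(i). m s in A}, and since no antichain of M_l(i) is
   larger than its set of odd elements, the trace is a maximum antichain. Hence A is determined by one of
   r_l(i) antichains per class and an arbitrary subset of the rest of {1..2n}. About
   (2 / (i (i+1))) * prod_j (1 - 1/p_j) * n multipliers m have 2n div m = i, which gives the bound
   after taking n-th roots. *)

section \<open>The primes \<open>p\<^sub>j\<close>\<close>

lemma prime_pr: "prime (pr j)"
  using enumerate_in_set[of "{q::nat. prime q}"] primes_infinite unfolding pr_def by auto

lemma pr_1: "pr 1 = 2"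
proof -
  have "(LEAST q::nat. prime q) = 2"
    by (rule Least_equality) (auto simp: prime_ge_2_nat)
  thus ?thesis unfolding pr_def by (simp add: enumerate_0)
qed

lemma inj_on_pr: "inj_on pr {1..}"
proof (rule inj_onI)
  fix a b assume ab: "a \<in> {1..}" "b \<in> {1..}" "pr a = pr b"
  have "strict_mono (enumerate {q::nat. prime q})"
    by (rule strict_mono_enumerate) (use primes_infinite in auto)
  hence "a - 1 = b - 1" using ab(3) unfolding pr_def by (auto dest: strict_mono_imp_inj_on injD)
  thus "a = b" using ab by auto
qed

definition pr_prod :: "nat \<Rightarrow> nat" where
  "pr_prod l = (\<Prod>j=1..l. pr j)"

definition coprime_density :: "nat \<Rightarrow> real" where
  "coprime_density l = (\<Prod>j=1..l. 1 - 1 / real (pr j))"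

lemma pr_prod_pos: "pr_prod l > 0"
  unfolding pr_prod_def using prime_pr by (simp add: prime_gt_0_nat)

lemma pr_dvd_pr_prod: "j \<in> {1..l} \<Longrightarrow> pr j dvd pr_prod l"
  unfolding pr_prod_def by (intro dvd_prodI) auto

lemma coprime_density_eq: "coprime_density l = totient (pr_prod l) / pr_prod l"
proof -
  have "totient (pr_prod l) = (\<Prod>j=1..l. totient (pr j))"
    unfolding pr_prod_def
  proof (rule totient_prod_coprime)
    show "pairwise coprime (pr ` {1..l})"
      unfolding pairwise_def using prime_pr by (auto simp: primes_coprime)
    show "inj_on pr {1..l}" using inj_on_pr by (rule inj_on_subset) auto
  qed
  also have "\<dots> = (\<Prod>j=1..l. pr j - 1)" using prime_pr by (simp add: totient_prime)
  finally have "real (totient (pr_prod l)) / pr_prod l = (\<Prod>j=1..l. real (pr j - 1) / pr j)"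
    by (simp add: pr_prod_def prod_dividef)
  also have "\<dots> = coprime_density l"
    unfolding coprime_density_def using prime_pr
    by (intro prod.cong) (auto simp: field_simps prime_gt_0_nat of_nat_diff prime_ge_1_nat)
  finally show ?thesis ..
qed

lemma odd_if_coprime_pr_prod:
  assumes "l \<ge> 1" "coprime m (pr_prod l)"
  shows "odd m"
proof -
  obtain k where "pr_prod l = 2 * k" using pr_dvd_pr_prod[of 1 l] pr_1 assms(1) by auto
  thus ?thesis using assms(2) by simp
qed

lemma coprime_pr_prod_Ml:
  assumes "coprime m (pr_prod l)" "s \<in> Ml l x"
  shows "coprime m s"
proof (rule ccontr)
  assume "\<not> coprime m s"
  then obtain p where p: "prime p" "p dvd m" "p dvd s"
    by (metis coprime_iff_gcd_eq_1 gcd_dvd1 gcd_dvd2 dvd_trans prime_factor_nat)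
  then obtain j where "j \<in> {1..l}" "p = pr j" using assms(2) unfolding Ml_def by blast
  hence "p dvd pr_prod l" using pr_dvd_pr_prod by simp
  with p assms(1) show False by (meson coprime_common_divisor not_prime_unit)
qed

section \<open>Counting integers coprime to \<open>P\<close>\<close>

definition coprime_count :: "nat \<Rightarrow> nat \<Rightarrow> nat" where
  "coprime_count P y = card {m\<in>{1..y}. coprime m P}"

lemma coprime_count_shift: "coprime_count P (P + y) = totient P + coprime_count P y"
proof -
  have coprime_shift: "coprime (m + P) P \<longleftrightarrow> coprime m P" for m
    by (simp add: coprime_iff_gcd_eq_1)
  have split: "{m\<in>{1..P + y}. coprime m P} =
      {m\<in>{1..P}. coprime m P} \<union> (\<lambda>m. m + P) ` {m\<in>{1..y}. coprime m P}"
  proof (intro equalityI subsetI)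
    fix x assume x: "x \<in> {m\<in>{1..P + y}. coprime m P}"
    show "x \<in> {m\<in>{1..P}. coprime m P} \<union> (\<lambda>m. m + P) ` {m\<in>{1..y}. coprime m P}"
    proof (cases "x \<le> P")
      case False
      hence "x = (x - P) + P" "x - P \<in> {m\<in>{1..y}. coprime m P}"
        using x coprime_shift[of "x - P"] by auto
      thus ?thesis by blast
    qed (use x in auto)
  qed (auto simp: coprime_shift)
  have "totient P = card {m\<in>{1..P}. coprime m P}"
    unfolding totient_def totatives_def by (rule arg_cong[where f=card]) auto
  thus ?thesis unfolding coprime_count_def split
    by (subst card_Un_disjoint) (auto simp: card_image inj_on_def)
qed

lemma coprime_count_periodic: "coprime_count P (q * P + r) = q * totient P + coprime_count P r"
  by (induction q) (simp_all add: coprime_count_shift add.assoc)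

lemma coprime_count_le: "coprime_count P y \<le> y"
proof -
  have "coprime_count P y \<le> card {1..y}" unfolding coprime_count_def by (intro card_mono) auto
  thus ?thesis by simp
qed

lemma coprime_count_mono: "y \<le> y' \<Longrightarrow> coprime_count P y \<le> coprime_count P y'"
  unfolding coprime_count_def by (intro card_mono) auto

lemma coprime_count_approx:
  assumes "P > 0"
  shows "\<bar>real (coprime_count P y) - totient P / P * y\<bar> \<le> P"
proof -
  define q r where "q = y div P" and "r = y mod P"
  define t where "t = r * (totient P / P)"
  have y: "y = q * P + r" unfolding q_def r_def by simp
  hence "coprime_count P y = q * totient P + coprime_count P r" by (simp add: coprime_count_periodic)
  hence "real (coprime_count P y) - totient P / P * y = coprime_count P r - t"
    unfolding t_def using assms by (subst (2) y) (simp add: field_simps)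
  moreover have "coprime_count P r \<le> P" "r \<le> P"
    using coprime_count_le[of P r] assms unfolding r_def by (simp_all add: le_trans)
  moreover have "0 \<le> t" unfolding t_def by simp
  moreover have "t \<le> r"
    unfolding t_def using totient_le[of P] by (intro mult_left_le) (auto simp: divide_le_eq_1)
  ultimately show ?thesis by (simp add: abs_le_iff)
qed

section \<open>Odd parts and primitive sets\<close>

definition odd_part :: "nat \<Rightarrow> nat" where
  "odd_part x = x div 2 ^ multiplicity 2 x"

lemma two_power_mult_odd_part: "2 ^ multiplicity 2 x * odd_part x = x"
  unfolding odd_part_def by (simp add: multiplicity_dvd)

lemma odd_odd_part: "x \<noteq> 0 \<Longrightarrow> odd (odd_part x)"
  unfolding odd_part_def by (simp add: multiplicity_decompose)

lemma odd_part_dvd: "odd_part x dvd x"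
  using two_power_mult_odd_part by (metis dvd_triv_right)

lemma odd_part_two_power_mult: "odd w \<Longrightarrow> odd_part (2 ^ k * w) = w"
  unfolding odd_part_def by (simp add: multiplicity_decomposeI[of _ 2 k w])

lemma dvd_or_dvd_if_odd_part_eq:
  assumes "odd_part x = odd_part y"
  shows "x dvd y \<or> y dvd x"
proof -
  have dvd: "2 ^ a * odd_part x dvd 2 ^ b * odd_part x" if "a \<le> b" for a b :: nat
    using that by (simp add: le_imp_power_dvd)
  show ?thesis
  proof (cases "multiplicity 2 x \<le> multiplicity 2 y")
    case True
    with dvd have "2 ^ multiplicity 2 x * odd_part x dvd 2 ^ multiplicity 2 y * odd_part y"
      using assms by simp
    thus ?thesis by (simp add: two_power_mult_odd_part)
  next
    case False
    with dvd have "2 ^ multiplicity 2 y * odd_part y dvd 2 ^ multiplicity 2 x * odd_part x"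
      using assms by simp
    thus ?thesis by (simp add: two_power_mult_odd_part)
  qed
qed

lemma odd_part_maps_primitive:
  assumes "0 \<notin> S" "\<forall>x\<in>S. \<forall>d. d dvd x \<longrightarrow> d \<in> S" "B \<subseteq> S" "primitive B"
  shows "inj_on odd_part B" "odd_part ` B \<subseteq> {q\<in>S. odd q}"
proof -
  show "inj_on odd_part B"
    using assms(4) dvd_or_dvd_if_odd_part_eq unfolding primitive_def inj_on_def by metis
  show "odd_part ` B \<subseteq> {q\<in>S. odd q}"
  proof (rule image_subsetI)
    fix x assume "x \<in> B"
    with assms(3) have "x \<in> S" by blast
    with assms(1) have "x \<noteq> 0" by metis
    moreover have "odd_part x \<in> S" using assms(2) \<open>x \<in> S\<close> odd_part_dvd by blast
    ultimately show "odd_part x \<in> {q\<in>S. odd q}" using odd_odd_part by simp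
  qed
qed

lemma card_primitive_le_card_odd:
  assumes "finite S" "0 \<notin> S" "\<forall>x\<in>S. \<forall>d. d dvd x \<longrightarrow> d \<in> S"
    and "B \<subseteq> S" "primitive B"
  shows "card B \<le> card {q\<in>S. odd q}"
  using card_inj_on_le[of odd_part B "{q\<in>S. odd q}"] odd_part_maps_primitive[OF assms(2-5)] assms(1)
  by simp

lemma card_odd_atLeastAtMost: "card {w\<in>{1..2*n}. odd (w::nat)} = n"
proof -
  have "{w\<in>{1..2*n}. odd (w::nat)} = (\<lambda>k. 2 * k + 1) ` {..<n}"
    by (auto elim!: oddE simp: image_iff)
  thus ?thesis by (simp add: card_image inj_on_def)
qed

lemma odd_part_image_eq:
  assumes "A \<subseteq> {1..2*n}" "card A = n" "primitive A"
  shows "odd_part ` A = {w\<in>{1..2*n}. odd w}"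
proof (rule card_subset_eq)
  have closed: "\<forall>x\<in>{1..2*n}. \<forall>d. d dvd x \<longrightarrow> d \<in> {1..2*n}"
  proof (intro ballI allI impI)
    fix x d :: nat assume "x \<in> {1..2*n}" "d dvd x"
    thus "d \<in> {1..2*n}" using dvd_imp_le[of d x] by (cases "d = 0") auto
  qed
  note maps = odd_part_maps_primitive[OF _ closed assms(1,3)]
  show "odd_part ` A \<subseteq> {w\<in>{1..2*n}. odd w}" using maps(2) by simp
  show "card (odd_part ` A) = card {w\<in>{1..2*n}. odd w}"
    using maps(1) assms(2) card_odd_atLeastAtMost[of n] by (simp add: card_image)
qed simp

section \<open>Maximum antichains of \<open>M\<^sub>l(i)\<close>\<close>

lemma finite_Ml: "finite (Ml l i)"
  by (rule finite_subset[of _ "{1..i}"]) (auto simp: Ml_def)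

lemma Ml_dvd_closed: "\<forall>x\<in>Ml l i. \<forall>d. d dvd x \<longrightarrow> d \<in> Ml l i"
proof (intro ballI allI impI)
  fix x d assume x: "x \<in> Ml l i" and "d dvd x"
  moreover from this have "d \<noteq> 0" "d \<le> x" by (auto simp: Ml_def dvd_imp_le)
  ultimately show "d \<in> Ml l i" unfolding Ml_def by (auto intro: dvd_trans)
qed

lemma finite_antichain_cards: "finite {card A | A. A \<subseteq> Ml l i \<and> primitive A}"
proof -
  have "{card A | A. A \<subseteq> Ml l i \<and> primitive A} \<subseteq> card ` Pow (Ml l i)" by auto
  thus ?thesis using finite_Ml by (meson finite_Pow_iff finite_imageI finite_subset)
qed

lemma card_le_width: "B \<subseteq> Ml l i \<Longrightarrow> primitive B \<Longrightarrow> card B \<le> width l i"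
  unfolding width_def using finite_antichain_cards by (intro Max_ge) auto

lemma width_le_card_odd: "width l i \<le> card {q\<in>Ml l i. odd q}"
proof -
  have "{card A | A. A \<subseteq> Ml l i \<and> primitive A} \<subseteq> {..card {q\<in>Ml l i. odd q}}"
    using card_primitive_le_card_odd[OF finite_Ml _ Ml_dvd_closed] by (force simp: Ml_def)
  moreover have "{} \<subseteq> Ml l i \<and> primitive {}" by (simp add: primitive_def)
  ultimately show ?thesis unfolding width_def
    using finite_antichain_cards by (intro Max.boundedI) auto
qed

definition max_antichains :: "nat \<Rightarrow> nat \<Rightarrow> nat set set" where
  "max_antichains l i = {B. B \<subseteq> Ml l i \<and> primitive B \<and> card B = width l i}"

lemma finite_max_antichains: "finite (max_antichains l i)"
  unfolding max_antichains_def
  by (rule finite_subset[of _ "Pow (Ml l i)"]) (blast, simp add: finite_Ml)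

lemma rl_eq_card_max_antichains: "rl l i = card (max_antichains l i)"
  unfolding rl_def max_antichains_def ..

lemma rl_pos: "rl l i > 0"
proof -
  have "{} \<subseteq> Ml l i \<and> primitive {}" by (simp add: primitive_def)
  hence "width l i \<in> {card A | A. A \<subseteq> Ml l i \<and> primitive A}"
    unfolding width_def using finite_antichain_cards by (intro Max_in) auto
  hence "max_antichains l i \<noteq> {}" unfolding max_antichains_def by auto
  thus ?thesis using finite_max_antichains by (simp add: rl_eq_card_max_antichains card_gt_0_iff)
qed

lemma two_power_mult_in_Ml:
  assumes "l \<ge> 1" "q \<in> Ml l x" "2 ^ k * q \<le> x"
  shows "2 ^ k * q \<in> Ml l x"
proof -
  have "p \<in> pr ` {1..l}" if "prime p" "p dvd 2 ^ k * q" for p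
  proof (cases "p dvd q")
    case False
    hence "p = 2" using that prime_dvd_mult_iff prime_dvd_power primes_dvd_imp_eq two_is_prime_nat
      by metis
    thus ?thesis using assms(1) pr_1 by force
  qed (use assms(2) that in \<open>auto simp: Ml_def\<close>)
  thus ?thesis using assms(2,3) by (auto simp: Ml_def)
qed

lemma primitive_mult_preimage:
  assumes "primitive A" "m > 0"
  shows "primitive {s\<in>S. m * s \<in> A}"
  unfolding primitive_def
proof (intro ballI impI)
  fix s t assume "s \<in> {s\<in>S. m * s \<in> A}" "t \<in> {s\<in>S. m * s \<in> A}" "s dvd t"
  moreover from \<open>s dvd t\<close> have "m * s dvd m * t" by simp
  ultimately have "m * s = m * t" using assms(1) unfolding primitive_def by blast
  thus "s = t" using assms(2) by simp
qed

lemma odd_Ml_subset_odd_part_trace: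
  assumes A: "A \<subseteq> {1..2*n}" "card A = n" "primitive A"
    and l: "l \<ge> 1" and m: "coprime m (pr_prod l)" "2*n div m = i"
  shows "{q\<in>Ml l i. odd q} \<subseteq> odd_part ` {s\<in>Ml l i. m * s \<in> A}"
proof
  fix q assume q: "q \<in> {q\<in>Ml l i. odd q}"
  have "odd m" using odd_if_coprime_pr_prod l m(1) .
  hence "m > 0" by (rule odd_pos)
  have "m * q \<le> m * (2 * n div m)" using q m(2) by (simp add: Ml_def)
  also have "\<dots> \<le> 2 * n" by (rule times_div_less_eq_dividend)
  finally have "m * q \<le> 2 * n" .
  with q \<open>odd m\<close> \<open>m > 0\<close> have "m * q \<in> odd_part ` A"
    unfolding odd_part_image_eq[OF A] by (auto simp: Ml_def)
  then obtain a where a: "a \<in> A" "odd_part a = m * q" by auto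
  define s where "s = 2 ^ multiplicity 2 a * q"
  have "m * s = a" using two_power_mult_odd_part[of a] a(2) unfolding s_def by (simp add: ac_simps)
  moreover from this have "s \<le> i"
    using a(1) A(1) \<open>m > 0\<close> m(2) by (auto simp: less_eq_div_iff_mult_less_eq mult.commute)
  ultimately have "s \<in> {s\<in>Ml l i. m * s \<in> A}"
    using a(1) two_power_mult_in_Ml[OF l] q unfolding s_def by auto
  moreover have "odd_part s = q" unfolding s_def using q by (simp add: odd_part_two_power_mult)
  ultimately show "q \<in> odd_part ` {s\<in>Ml l i. m * s \<in> A}" by force
qed

lemma trace_in_max_antichains:
  assumes A: "A \<subseteq> {1..2*n}" "card A = n" "primitive A"
    and l: "l \<ge> 1" and m: "coprime m (pr_prod l)" "2*n div m = i"
  shows "{s\<in>Ml l i. m * s \<in> A} \<in> max_antichains l i"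
proof -
  let ?D = "{s\<in>Ml l i. m * s \<in> A}"
  have "m > 0" using odd_if_coprime_pr_prod[OF l m(1)] by (rule odd_pos)
  with A(3) have prim: "primitive ?D" by (rule primitive_mult_preimage)
  have "card {q\<in>Ml l i. odd q} \<le> card (odd_part ` ?D)"
    using odd_Ml_subset_odd_part_trace[OF assms] finite_Ml by (intro card_mono) auto
  also have "\<dots> \<le> card ?D" using finite_Ml by (intro card_image_le) auto
  finally have "card {q\<in>Ml l i. odd q} \<le> card ?D" .
  moreover have "card ?D \<le> width l i" using prim by (intro card_le_width) auto
  ultimately show ?thesis unfolding max_antichains_def using prim width_le_card_odd[of l i] by auto
qed

section \<open>Counting primitive sets class by class\<close>

lemma card_le_traces:
  fixes F :: "'a set set" and g :: "'i \<Rightarrow> 'b \<Rightarrow> 'a"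
  assumes "finite X" "finite G" "\<And>A. A \<in> F \<Longrightarrow> A \<subseteq> X"
    and "\<And>A m. A \<in> F \<Longrightarrow> m \<in> G \<Longrightarrow> {s\<in>D m. g m s \<in> A} \<in> T m"
    and "\<And>m. m \<in> G \<Longrightarrow> finite (T m)"
  shows "card F \<le> (\<Prod>m\<in>G. card (T m)) * 2 ^ card (X - (\<Union>m\<in>G. g m ` D m))"
proof -
  define U where "U = (\<Union>m\<in>G. g m ` D m)"
  define trace where "trace A = (restrict (\<lambda>m. {s\<in>D m. g m s \<in> A}) G, A - U)" for A
  have recover: "A = snd (trace A) \<union> (\<Union>m\<in>G. g m ` fst (trace A) m)" for A
    unfolding trace_def U_def by auto
  have "inj_on trace F"
    by (rule inj_onI) (metis recover)
  moreover have "trace ` F \<subseteq> PiE G T \<times> Pow (X - U)"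
    using assms(3,4) unfolding trace_def by auto
  ultimately have "card F \<le> card (PiE G T \<times> Pow (X - U))"
    using assms by (intro card_inj_on_le) (auto intro!: finite_cartesian_product finite_PiE)
  thus ?thesis unfolding U_def by (simp add: card_cartesian_product card_PiE card_Pow assms(1,2))
qed

definition multipliers :: "nat \<Rightarrow> nat \<Rightarrow> nat \<Rightarrow> nat set" where
  "multipliers l n i = {m\<in>{1..2*n}. coprime m (pr_prod l) \<and> 2*n div m = i}"

lemma multiplier_eq_if_mult_Ml_eq:
  assumes "coprime m1 (pr_prod l)" "coprime m2 (pr_prod l)" "s1 \<in> Ml l x1" "s2 \<in> Ml l x2"
    and "m1 * s1 = m2 * s2"
  shows "m1 = m2"
proof (rule dvd_antisym)
  show "m1 dvd m2"
    using assms(5) coprime_pr_prod_Ml[OF assms(1,4)] by (metis coprime_dvd_mult_left_iff dvd_triv_left)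
  show "m2 dvd m1"
    using assms(5) coprime_pr_prod_Ml[OF assms(2,3)] by (metis coprime_dvd_mult_left_iff dvd_triv_left)
qed

lemma finite_multipliers: "finite (multipliers l n i)"
  unfolding multipliers_def by simp

lemma disjoint_multipliers: "i \<noteq> j \<Longrightarrow> multipliers l n i \<inter> multipliers l n j = {}"
  unfolding multipliers_def by auto

lemma sum_multipliers_div:
  assumes "finite I"
  shows "(\<Sum>m\<in>(\<Union>i\<in>I. multipliers l n i). f (2*n div m) :: nat) =
    (\<Sum>i\<in>I. card (multipliers l n i) * f i)"
proof -
  have "(\<Sum>m\<in>(\<Union>i\<in>I. multipliers l n i). f (2*n div m)) =
      (\<Sum>i\<in>I. \<Sum>m\<in>multipliers l n i. f (2*n div m))"
    using assms by (intro sum.UNION_disjoint) (auto simp: finite_multipliers disjoint_multipliers)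
  also have "\<dots> = (\<Sum>i\<in>I. card (multipliers l n i) * f i)"
    by (intro sum.cong) (auto simp: multipliers_def)
  finally show ?thesis .
qed

lemma prod_multipliers_div:
  assumes "finite I"
  shows "(\<Prod>m\<in>(\<Union>i\<in>I. multipliers l n i). f (2*n div m) :: nat) =
    (\<Prod>i\<in>I. f i ^ card (multipliers l n i))"
proof -
  have "(\<Prod>m\<in>(\<Union>i\<in>I. multipliers l n i). f (2*n div m)) =
      (\<Prod>i\<in>I. \<Prod>m\<in>multipliers l n i. f (2*n div m))"
    using assms by (intro prod.UNION_disjoint) (auto simp: finite_multipliers disjoint_multipliers)
  also have "\<dots> = (\<Prod>i\<in>I. f i ^ card (multipliers l n i))"
    by (intro prod.cong) (auto simp: multipliers_def)
  finally show ?thesis .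
qed

lemma multiplier_classes_subset:
  "(\<Union>m\<in>(\<Union>i\<in>I. multipliers l n i). (*) m ` Ml l (2*n div m)) \<subseteq> {1..2*n}"
proof clarify
  fix i m s assume "m \<in> multipliers l n i" "s \<in> Ml l (2*n div m)"
  hence "m \<ge> 1" "s \<ge> 1" "s * m \<le> 2*n"
    by (auto simp: multipliers_def Ml_def less_eq_div_iff_mult_less_eq)
  thus "m * s \<in> {1..2*n}" by (simp add: mult.commute)
qed

lemma card_multiplier_classes:
  assumes "finite I"
  shows "card (\<Union>m\<in>(\<Union>i\<in>I. multipliers l n i). (*) m ` Ml l (2*n div m)) =
    (\<Sum>i\<in>I. card (multipliers l n i) * card (Ml l i))"
proof -
  let ?G = "\<Union>i\<in>I. multipliers l n i"
  have pos: "m > 0" if "m \<in> ?G" for m using that by (auto simp: multipliers_def)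
  have "card (\<Union>m\<in>?G. (*) m ` Ml l (2*n div m)) =
      (\<Sum>m\<in>?G. card ((*) m ` Ml l (2*n div m)))"
  proof (rule card_UN_disjoint)
    show "\<forall>m1\<in>?G. \<forall>m2\<in>?G. m1 \<noteq> m2 \<longrightarrow>
        (*) m1 ` Ml l (2*n div m1) \<inter> (*) m2 ` Ml l (2*n div m2) = {}"
      using multiplier_eq_if_mult_Ml_eq unfolding multipliers_def by blast
  qed (use assms in \<open>auto simp: finite_multipliers finite_Ml\<close>)
  also have "\<dots> = (\<Sum>m\<in>?G. card (Ml l (2*n div m)))"
  proof (rule sum.cong)
    fix m assume "m \<in> ?G"
    hence "m > 0" by (rule pos)
    thus "card ((*) m ` Ml l (2*n div m)) = card (Ml l (2*n div m))"
      by (simp add: card_image inj_on_def)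
  qed simp
  finally show ?thesis using sum_multipliers_div[OF assms] by simp
qed

lemma fprim_le:
  assumes "l \<ge> 1"
  shows "fprim n \<le> (\<Prod>i=1..K. rl l i ^ card (multipliers l n i)) *
    2 ^ (2*n - (\<Sum>i=1..K. card (multipliers l n i) * card (Ml l i)))"
proof -
  let ?G = "\<Union>i\<in>{1..K}. multipliers l n i"
  let ?U = "\<Union>m\<in>?G. (*) m ` Ml l (2*n div m)"
  have "fprim n \<le> (\<Prod>m\<in>?G. card (max_antichains l (2*n div m))) * 2 ^ card ({1..2*n} - ?U)"
    unfolding fprim_def
  proof (rule card_le_traces)
    fix A m assume "A \<in> {A. A \<subseteq> {1..2*n} \<and> card A = n \<and> primitive A}" "m \<in> ?G"
    thus "{s\<in>Ml l (2*n div m). m * s \<in> A} \<in> max_antichains l (2*n div m)"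
      using assms by (intro trace_in_max_antichains) (auto simp: multipliers_def)
  qed (auto simp: finite_multipliers finite_max_antichains)
  also have "card ({1..2*n} - ?U) = 2*n - (\<Sum>i=1..K. card (multipliers l n i) * card (Ml l i))"
  proof -
    have sub: "?U \<subseteq> {1..2*n}" by (rule multiplier_classes_subset)
    have "card ({1..2*n} - ?U) = card {1..2*n} - card ?U"
      by (rule card_Diff_subset[OF finite_subset[OF sub finite_atLeastAtMost] sub])
    thus ?thesis using card_multiplier_classes[of "{1..K}" l n] by simp
  qed
  also have "(\<Prod>m\<in>?G. card (max_antichains l (2*n div m))) =
      (\<Prod>i=1..K. rl l i ^ card (multipliers l n i))"
    using prod_multipliers_div[where f="\<lambda>i. card (max_antichains l i)" and I="{1..K}"]
    by (simp add: rl_eq_card_max_antichains)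
  finally show ?thesis .
qed

lemma sum_card_multipliers_le: "(\<Sum>i=1..K. card (multipliers l n i) * card (Ml l i)) \<le> 2*n"
proof -
  have "card (\<Union>m\<in>(\<Union>i\<in>{1..K}. multipliers l n i). (*) m ` Ml l (2*n div m)) \<le> card {1..2*n}"
    by (rule card_mono[OF finite_atLeastAtMost multiplier_classes_subset])
  thus ?thesis using card_multiplier_classes[of "{1..K}" l n] by simp
qed

section \<open>Asymptotics\<close>

lemma div_eq_iff_le_div:
  fixes N m i :: nat
  assumes "m > 0" "i > 0"
  shows "N div m = i \<longleftrightarrow> m \<le> N div i \<and> \<not> m \<le> N div Suc i"
proof -
  have swap: "m \<le> N div j \<longleftrightarrow> j \<le> N div m" if "j > 0" for j
    using assms that by (simp add: less_eq_div_iff_mult_less_eq mult.commute)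
  show ?thesis using swap[of i] swap[of "Suc i"] assms by auto
qed

lemma card_multipliers:
  assumes "i > 0"
  shows "card (multipliers l n i) =
    coprime_count (pr_prod l) (2*n div i) - coprime_count (pr_prod l) (2*n div Suc i)"
proof -
  let ?C = "\<lambda>y. {m\<in>{1..y}. coprime m (pr_prod l)}"
  have "m \<in> multipliers l n i \<longleftrightarrow> m \<in> ?C (2*n div i) - ?C (2*n div Suc i)" for m
  proof (cases "m > 0")
    case True
    have "m \<le> 2*n div i \<Longrightarrow> m \<le> 2*n" using div_le_dividend[of "2*n" i] by linarith
    thus ?thesis using div_eq_iff_le_div[OF True assms, of "2*n"] True
      unfolding multipliers_def by auto
  qed (simp add: multipliers_def)
  hence "multipliers l n i = ?C (2*n div i) - ?C (2*n div Suc i)" by blast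
  moreover have "?C (2*n div Suc i) \<subseteq> ?C (2*n div i)"
    using div_le_mono2[of i "Suc i" "2*n"] assms by auto
  ultimately show ?thesis unfolding coprime_count_def by (simp add: card_Diff_subset)
qed

lemma tendsto_div_of_bounded_error:
  fixes x :: "nat \<Rightarrow> real" and a B :: real
  assumes "\<And>n. \<bar>x n - a * n\<bar> \<le> B"
  shows "(\<lambda>n. x n / n) \<longlonglongrightarrow> a"
proof -
  have "(\<lambda>n. x n / n - a) \<longlonglongrightarrow> 0"
  proof (rule Lim_null_comparison)
    show "\<forall>\<^sub>F n in sequentially. norm (x n / n - a) \<le> B / n"
      using eventually_gt_at_top[of 0]
    proof eventually_elim
      case (elim n)
      hence "norm (x n / n - a) = \<bar>x n - a * n\<bar> / n" by (simp add: field_simps)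
      also have "\<dots> \<le> B / n" using assms[of n] by (simp add: divide_right_mono)
      finally show ?case .
    qed
  qed (rule lim_const_over_n)
  thus ?thesis by (simp add: LIM_zero_iff)
qed

lemma nat_div_approx:
  assumes "i > 0"
  shows "\<bar>real (N div i) - N / i\<bar> \<le> 1"
proof -
  have "real N / i = N div i + (N mod i) / i"
    using assms by (simp add: field_simps flip: of_nat_mult of_nat_add)
  moreover have "(N mod i) / i < (1::real)" using assms by simp
  ultimately show ?thesis by simp
qed

lemma coprime_count_div_approx:
  assumes "P > 0" "i > 0"
  shows "\<bar>real (coprime_count P (N div i)) - totient P / P * (N / i)\<bar> \<le> P + 1"
proof -
  have "\<bar>totient P / P * real (N div i) - totient P / P * (N / i)\<bar> \<le> 1 * 1"
    unfolding right_diff_distrib[symmetric] abs_mult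
    using nat_div_approx[OF assms(2)] totient_le[of P]
    by (intro mult_mono) (auto simp: divide_le_eq_1)
  thus ?thesis using coprime_count_approx[OF assms(1), of "N div i"] by linarith
qed

lemma card_multipliers_tendsto:
  assumes "i > 0"
  shows "(\<lambda>n. card (multipliers l n i) / n) \<longlonglongrightarrow>
    2 / (real i * (real i + 1)) * coprime_density l"
proof (rule tendsto_div_of_bounded_error)
  fix n
  let ?P = "pr_prod l" and ?d = "coprime_density l"
  have diff_le: "\<bar>(a - b) - (x - y)\<bar> \<le> 2 * e"
    if "\<bar>a - x\<bar> \<le> e" "\<bar>b - y\<bar> \<le> e" for a b x y e :: real
    using that by linarith
  have card: "card (multipliers l n i) =
      real (coprime_count ?P (2*n div i)) - coprime_count ?P (2*n div Suc i)"
    using card_multipliers[OF assms] coprime_count_mono div_le_mono2[of i "Suc i" "2*n"] assms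
    by (simp add: of_nat_diff)
  have density: "2 / (real i * (real i + 1)) * ?d * n = ?d * (2 * n / i) - ?d * (2 * n / Suc i)"
    using assms by (simp add: field_simps)
  have "\<bar>coprime_count ?P (2*n div i) - ?d * (2 * n / i)\<bar> \<le> real ?P + 1"
    using coprime_count_div_approx[OF pr_prod_pos[of l] assms, where N="2*n"]
    by (simp add: coprime_density_eq)
  moreover have "\<bar>coprime_count ?P (2*n div Suc i) - ?d * (2 * n / Suc i)\<bar> \<le> real ?P + 1"
    using coprime_count_div_approx[OF pr_prod_pos[of l], where i="Suc i" and N="2*n"]
    by (simp add: coprime_density_eq)
  ultimately show
    "\<bar>card (multipliers l n i) - 2 / (real i * (real i + 1)) * ?d * n\<bar> \<le> 2 * (real ?P + 1)"
    unfolding card density by (rule diff_le)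
qed

definition fprim_root_bound :: "nat \<Rightarrow> nat \<Rightarrow> nat \<Rightarrow> real" where
  "fprim_root_bound l K n =
    (\<Prod>i=1..K. real (rl l i) powr (card (multipliers l n i) / n)) *
    2 powr (2 - (\<Sum>i=1..K. card (multipliers l n i) / n * card (Ml l i)))"

lemma fprim_root_le:
  assumes "l \<ge> 1" "n > 0"
  shows "fprim n powr (1 / n) \<le> fprim_root_bound l K n"
proof -
  define R where "R = (\<Sum>i=1..K. card (multipliers l n i) * card (Ml l i))"
  define N where "N = (\<Prod>i=1..K. rl l i ^ card (multipliers l n i)) * 2 ^ (2*n - R)"
  have "R \<le> 2*n" unfolding R_def by (rule sum_card_multipliers_le)
  have "real N = (\<Prod>i=1..K. real (rl l i) powr card (multipliers l n i)) * 2 powr real (2*n - R)"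
    unfolding N_def using rl_pos by (simp add: powr_realpow)
  hence "real N powr (1 / n) =
      (\<Prod>i=1..K. real (rl l i) powr (card (multipliers l n i) / n)) * 2 powr (real (2*n - R) / n)"
    by (simp add: powr_mult prod_nonneg prod_powr_distrib powr_powr)
  also have "real (2*n - R) / n = 2 - (\<Sum>i=1..K. card (multipliers l n i) / n * card (Ml l i))"
    using \<open>R \<le> 2*n\<close> assms(2) unfolding R_def
    by (simp add: of_nat_diff diff_divide_distrib sum_divide_distrib)
  finally have "real N powr (1 / n) = fprim_root_bound l K n" unfolding fprim_root_bound_def .
  moreover have "fprim n \<le> N" unfolding N_def R_def using fprim_le[OF assms(1)] .
  ultimately show ?thesis by (metis of_nat_0_le_iff of_nat_le_iff powr_mono2 zero_le_divide_1_iff)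
qed

lemma fprim_root_bound_tendsto:
  "fprim_root_bound l K \<longlonglongrightarrow> cLK l K * 2 powr etaLK l K"
proof -
  have card: "(\<lambda>n. card (multipliers l n i) / n) \<longlonglongrightarrow>
      2 / (real i * (real i + 1)) * coprime_density l" if "i \<in> {1..K}" for i
    using card_multipliers_tendsto that by simp
  have "(\<lambda>n. \<Prod>i=1..K. real (rl l i) powr (card (multipliers l n i) / n)) \<longlonglongrightarrow>
      (\<Prod>i=1..K. real (rl l i) powr (2 / (real i * (real i + 1)) * coprime_density l))"
    using rl_pos[of l] by (intro tendsto_prod tendsto_powr tendsto_const card) auto
  moreover have "(\<lambda>n. 2 powr (2 - (\<Sum>i=1..K. card (multipliers l n i) / n * card (Ml l i)))) \<longlonglongrightarrow>
      2 powr (2 - (\<Sum>i=1..K. 2 / (real i * (real i + 1)) * coprime_density l * card (Ml l i)))"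
    by (intro tendsto_intros card) auto
  ultimately show ?thesis
    unfolding fprim_root_bound_def cLK_def etaLK_def coprime_density_def by (intro tendsto_mult)
qed

theorem mainTheorem8:
  fixes l K :: nat
  assumes "l \<ge> 1" and "K \<ge> 1"
  shows "limsup (\<lambda>n. ereal (real (fprim n) powr (1 / real n)))
           \<le> ereal (cLK l K * 2 powr etaLK l K)"
proof -
  have "\<forall>\<^sub>F n in sequentially. ereal (fprim n powr (1 / n)) \<le> ereal (fprim_root_bound l K n)"
    using eventually_gt_at_top[of 0] by eventually_elim (use fprim_root_le[OF assms(1)] in simp)
  hence "limsup (\<lambda>n. ereal (fprim n powr (1 / n))) \<le> limsup (\<lambda>n. ereal (fprim_root_bound l K n))"
    by (rule Limsup_mono)
  also have "\<dots> = ereal (cLK l K * 2 powr etaLK l K)"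
    using fprim_root_bound_tendsto by (intro lim_imp_Limsup) simp_all
  finally show ?thesis .
qed

end
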